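(* For every $n\ge3$, the line graph of the $n$-cube $Q_n$ does not admit perfect state transfer between any two distinct vertices with respect to its adjacency matrix.
   Context: The $n$-cube has vertex set $\{0,1\}^n$, two vertices adjacent iff they differ in exactly one coordinate. The line graph of $X$ has vertex set $E(X)$, edges adjacent iff they share an endpoint. Perfect state transfer from vertex $x$ to vertex $y$ with Hamiltonian $M$: $e^{-\mathrm{i}\tau M}\mathbf e_x=\eta\mathbf e_y$ for some $\tau>0$, $|\eta|=1$. *)

theory Defs
  imports Complex_Main
begin

definition mat_one :: "'a \<Rightarrow> 'a \<Rightarrow> complex" where
  "mat_one x y = (if x = y then 1 else 0)"

fun mat_pow :: "'a set \<Rightarrow> ('a \<Rightarrow> 'a \<Rightarrow> complex) \<Rightarrow> nat \<Rightarrow> 'a \<Rightarrow> 'a \<Rightarrow> complex" where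
  "mat_pow V M 0 = mat_one"
| "mat_pow V M (Suc k) = (\<lambda>x y. \<Sum>z\<in>V. M x z * mat_pow V M k z y)"

definition mat_exp :: "'a set \<Rightarrow> ('a \<Rightarrow> 'a \<Rightarrow> complex) \<Rightarrow> 'a \<Rightarrow> 'a \<Rightarrow> complex" where
  "mat_exp V M x y = (\<Sum>k. mat_pow V M k x y / of_nat (fact k))"

(* perfect state transfer from x to y w.r.t. Hamiltonian H on vertex set V:
   exp(-i tau H) e_x = eta e_y for some tau > 0, |eta| = 1 *)
definition perfect_state_transfer ::
  "'a set \<Rightarrow> ('a \<Rightarrow> 'a \<Rightarrow> complex) \<Rightarrow> 'a \<Rightarrow> 'a \<Rightarrow> bool" where
  "perfect_state_transfer V H x y \<longleftrightarrow>
     (\<exists>\<tau>::real. \<tau> > 0 \<and> (\<exists>\<eta>::complex. cmod \<eta> = 1 \<and>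
        (\<forall>z\<in>V. mat_exp V (\<lambda>a b. - \<i> * of_real \<tau> * H a b) z x = \<eta> * mat_one z y)))"

(* n-cube: vertices are subsets of {0..<n} (i.e. characteristic vectors in {0,1}^n);
   two vertices are adjacent iff they differ in exactly one coordinate. *)
definition cube_vertices :: "nat \<Rightarrow> nat set set" where
  "cube_vertices n = Pow {0..<n}"

definition cube_adj :: "nat set \<Rightarrow> nat set \<Rightarrow> bool" where
  "cube_adj S T \<longleftrightarrow> card ((S - T) \<union> (T - S)) = 1"

definition cube_edges :: "nat \<Rightarrow> nat set set set" where
  "cube_edges n = {{S, T} | S T. S \<in> cube_vertices n \<and> T \<in> cube_vertices n \<and> cube_adj S T}"

definition line_adj :: "'a set \<Rightarrow> 'a set \<Rightarrow> bool" where
  "line_adj e f \<longleftrightarrow> e \<noteq> f \<and> e \<inter> f \<noteq> {}"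

definition line_adjacency_matrix :: "'a set \<Rightarrow> 'a set \<Rightarrow> complex" where
  "line_adjacency_matrix e f = (if line_adj e f then 1 else 0)"

end

theory Submission
  imports Defs
begin

text \<open>If \<open>a b c d\<close> is a 4-cycle of a graph, the vector on its line graph that is \<open>+1\<close> on the
edges \<open>ab, cd\<close>, \<open>-1\<close> on \<open>bc, da\<close> and \<open>0\<close> elsewhere is an eigenvector of the adjacency matrix
\<open>A\<close> for the eigenvalue \<open>-2\<close>: writing \<open>A = N\<^sup>T N - 2 I\<close> with \<open>N\<close> the vertex-edge incidence
matrix, this signed cycle lies in the kernel of \<open>N\<close>. An eigenvector \<open>z\<close> of \<open>A\<close> satisfies
\<open>z\<^sup>T exp(-i\<tau>A) = exp(2i\<tau>) z\<^sup>T\<close>, so \<open>exp(-i\<tau>A) e\<^sub>x = \<eta> e\<^sub>y\<close> is impossible when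
\<open>z\<^sub>x \<noteq> 0 = z\<^sub>y\<close>. For \<open>n \<ge> 3\<close> every edge \<open>e\<close> of \<open>Q\<^sub>n\<close> lies on two 4-cycles that share
only \<open>e\<close>, and any other edge \<open>f\<close> avoids one of them.\<close>

definition left_eigenvector ::
  "'a set \<Rightarrow> ('a \<Rightarrow> 'a \<Rightarrow> complex) \<Rightarrow> ('a \<Rightarrow> complex) \<Rightarrow> complex \<Rightarrow> bool" where
  "left_eigenvector V M z c \<longleftrightarrow> (\<forall>w\<in>V. (\<Sum>x\<in>V. z x * M x w) = c * z w)"

lemma left_eigenvector_scale:
  "left_eigenvector V M z c \<Longrightarrow> left_eigenvector V (\<lambda>a b. s * M a b) z (s * c)"
  by (simp add: left_eigenvector_def mult.left_commute sum_distrib_left[symmetric])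

lemma norm_mat_pow_le:
  assumes "\<And>x y. x \<in> V \<Longrightarrow> y \<in> V \<Longrightarrow> cmod (M x y) \<le> m" and "0 \<le> m" and "x \<in> V"
  shows "cmod (mat_pow V M k x y) \<le> (real (card V) * m) ^ k"
  using assms(3)
proof (induction k arbitrary: x y)
  case 0
  then show ?case by (simp add: mat_one_def)
next
  case (Suc k)
  have "cmod (mat_pow V M (Suc k) x y) \<le> (\<Sum>z\<in>V. cmod (M x z) * cmod (mat_pow V M k z y))"
    unfolding mat_pow.simps norm_mult[symmetric] by (rule norm_sum)
  also have "\<dots> \<le> (\<Sum>z\<in>V. m * (real (card V) * m) ^ k)"
    using Suc by (intro sum_mono mult_mono assms) auto
  also have "\<dots> = (real (card V) * m) ^ Suc k"
    by simp
  finally show ?case .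
qed

lemma summable_mat_exp:
  assumes "finite V" and "x \<in> V"
  shows "summable (\<lambda>k. mat_pow V M k x y / of_nat (fact k))"
proof -
  define m where "m = (\<Sum>(a, b)\<in>V \<times> V. cmod (M a b))"
  have bound: "cmod (M a b) \<le> m" if "a \<in> V" "b \<in> V" for a b
    using member_le_sum[of "(a, b)" "V \<times> V" "\<lambda>(a, b). cmod (M a b)"] that assms(1)
    unfolding m_def by auto
  have "0 \<le> m"
    unfolding m_def by (intro sum_nonneg) auto
  let ?r = "real (card V) * m"
  have estimate: "norm (mat_pow V M k x y / of_nat (fact k)) \<le> ?r ^ k / fact k" for k
  proof -
    have "norm (mat_pow V M k x y / of_nat (fact k)) = cmod (mat_pow V M k x y) / fact k"
      by (simp add: norm_divide)
    also have "\<dots> \<le> ?r ^ k / fact k"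
      by (rule divide_right_mono[OF norm_mat_pow_le[OF bound \<open>0 \<le> m\<close> assms(2)] fact_ge_zero])
    finally show ?thesis .
  qed
  have "summable (\<lambda>k. ?r ^ k / fact k)"
    using summable_exp[of ?r] by (simp add: divide_inverse mult.commute)
  then have "summable (\<lambda>k. norm (mat_pow V M k x y / of_nat (fact k)))"
    by (rule summable_comparison_test[rotated]) (use estimate in auto)
  then show ?thesis
    by (rule summable_norm_cancel)
qed

lemma left_eigenvector_mat_pow:
  assumes "finite V" and "left_eigenvector V M z c" and "y \<in> V"
  shows "(\<Sum>x\<in>V. z x * mat_pow V M k x y) = c ^ k * z y"
proof (induction k)
  case 0
  show ?case
    using assms by (simp add: mat_one_def if_distrib sum.delta cong: if_cong)
next
  case (Suc k)
  have "(\<Sum>x\<in>V. z x * mat_pow V M (Suc k) x y) = (\<Sum>x\<in>V. \<Sum>w\<in>V. z x * M x w * mat_pow V M k w y)"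
    by (simp add: sum_distrib_left mult.assoc)
  also have "\<dots> = (\<Sum>w\<in>V. (\<Sum>x\<in>V. z x * M x w) * mat_pow V M k w y)"
    by (subst sum.swap) (simp add: sum_distrib_right)
  also have "\<dots> = c * (\<Sum>w\<in>V. z w * mat_pow V M k w y)"
    using assms(2) by (simp add: left_eigenvector_def sum_distrib_left mult.assoc)
  finally show ?case
    using Suc by simp
qed

lemma left_eigenvector_mat_exp:
  assumes "finite V" and "left_eigenvector V M z c" and "y \<in> V"
  shows "(\<Sum>x\<in>V. z x * mat_exp V M x y) = exp c * z y"
proof -
  have "(\<lambda>k. \<Sum>x\<in>V. z x * (mat_pow V M k x y / of_nat (fact k))) sums (\<Sum>x\<in>V. z x * mat_exp V M x y)"
    unfolding mat_exp_def
    by (intro sums_sum sums_mult summable_sums summable_mat_exp[OF assms(1)])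
  moreover have "(\<lambda>k. \<Sum>x\<in>V. z x * (mat_pow V M k x y / of_nat (fact k))) = (\<lambda>k. z y * (c ^ k /\<^sub>R fact k))"
  proof
    fix k
    have "(\<Sum>x\<in>V. z x * (mat_pow V M k x y / of_nat (fact k)))
        = (\<Sum>x\<in>V. z x * mat_pow V M k x y) / of_nat (fact k)"
      by (simp add: sum_divide_distrib)
    then show "(\<Sum>x\<in>V. z x * (mat_pow V M k x y / of_nat (fact k))) = z y * (c ^ k /\<^sub>R fact k)"
      by (simp add: left_eigenvector_mat_pow[OF assms] scaleR_conv_of_real field_simps)
  qed
  moreover have "(\<lambda>k. z y * (c ^ k /\<^sub>R fact k)) sums (z y * exp c)"
    by (intro sums_mult exp_converges)
  ultimately show ?thesis
    by (metis mult.commute sums_unique2)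
qed

lemma no_perfect_state_transfer_if_left_eigenvector_separates:
  assumes "finite V" and "x \<in> V" and "left_eigenvector V H z c" and "z x \<noteq> 0" and "z y = 0"
  shows "\<not> perfect_state_transfer V H x y"
proof
  assume "perfect_state_transfer V H x y"
  then obtain \<tau> :: real and \<eta> where
    transfer: "\<forall>v\<in>V. mat_exp V (\<lambda>a b. - \<i> * of_real \<tau> * H a b) v x = \<eta> * mat_one v y"
    unfolding perfect_state_transfer_def by blast
  have "exp (- \<i> * of_real \<tau> * c) * z x = (\<Sum>v\<in>V. z v * mat_exp V (\<lambda>a b. - \<i> * of_real \<tau> * H a b) v x)"
    by (rule left_eigenvector_mat_exp[OF assms(1) left_eigenvector_scale[OF assms(3)] assms(2), symmetric])
  also have "\<dots> = (\<Sum>v\<in>V. z v * (\<eta> * mat_one v y))"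
    using transfer by simp
  also have "\<dots> = 0"
    using assms(5) by (simp add: mat_one_def if_distrib sum.delta cong: if_cong)
  finally show False
    using assms(4) by simp
qed

lemma line_adjacency_matrix_eq_card_inter:
  assumes "card e = 2" and "card w = 2"
  shows "line_adjacency_matrix e w = of_nat (card (e \<inter> w)) - (if e = w then 2 else 0)"
proof (cases "e = w")
  case True
  then show ?thesis
    using assms by (simp add: line_adjacency_matrix_def line_adj_def)
next
  case False
  have "finite e" "finite w"
    using assms by (auto intro: card_ge_0_finite)
  have "card (e \<inter> w) \<noteq> 2"
  proof
    assume "card (e \<inter> w) = 2"
    then have "e \<inter> w = e" "e \<inter> w = w"
      using assms \<open>finite e\<close> \<open>finite w\<close> by (metis Int_lower1 Int_lower2 card_subset_eq)+
    with False show False by simp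
  qed
  moreover have "card (e \<inter> w) \<le> 2"
    using assms \<open>finite e\<close> by (metis Int_lower1 card_mono)
  ultimately have "card (e \<inter> w) = 0 \<or> card (e \<inter> w) = 1"
    by linarith
  with False \<open>finite e\<close> show ?thesis
    by (auto simp: line_adjacency_matrix_def line_adj_def)
qed

definition square_vector :: "'a \<Rightarrow> 'a \<Rightarrow> 'a \<Rightarrow> 'a \<Rightarrow> 'a set \<Rightarrow> complex" where
  "square_vector p1 p2 p3 p4 e =
     of_bool (e = {p1, p2}) - of_bool (e = {p2, p3}) + of_bool (e = {p3, p4}) - of_bool (e = {p4, p1})"

lemma line_graph_square_left_eigenvector:
  assumes "finite V" and two_sets: "\<forall>w\<in>V. card w = 2" and "distinct [p1, p2, p3, p4]"
    and square: "{p1, p2} \<in> V" "{p2, p3} \<in> V" "{p3, p4} \<in> V" "{p4, p1} \<in> V"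
  shows "left_eigenvector V line_adjacency_matrix (square_vector p1 p2 p3 p4) (-2)"
  unfolding left_eigenvector_def
proof
  fix w assume "w \<in> V"
  let ?A = line_adjacency_matrix
  let ?I = "\<lambda>e. of_nat (card (e \<inter> w)) :: complex"
  have "finite w"
    using two_sets \<open>w \<in> V\<close> by (auto intro: card_ge_0_finite)
  have card_inter: "?I e = (\<Sum>v\<in>w. of_bool (v \<in> e))" for e
    using \<open>finite w\<close> by (simp add: Int_commute Int_def)
  \<comment> \<open>Every vertex lies on as many edges of the square with sign \<open>+\<close> as with sign \<open>-\<close>.\<close>
  have cancel: "?I {p1, p2} - ?I {p2, p3} + ?I {p3, p4} - ?I {p4, p1} = 0"
    unfolding card_inter sum_subtractf[symmetric] sum.distrib[symmetric]
    using \<open>distinct [p1, p2, p3, p4]\<close> by (intro sum.neutral) auto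
  have adjacency: "?A e w = ?I e - 2 * of_bool (w = e)" if "e \<in> V" for e
    using line_adjacency_matrix_eq_card_inter[of e w] two_sets \<open>w \<in> V\<close> that by (auto simp: eq_commute)
  have "?A {p1, p2} w - ?A {p2, p3} w + ?A {p3, p4} w - ?A {p4, p1} w
      = (?I {p1, p2} - ?I {p2, p3} + ?I {p3, p4} - ?I {p4, p1}) - 2 * square_vector p1 p2 p3 p4 w"
    by (simp add: adjacency square square_vector_def algebra_simps)
  also have "\<dots> = -2 * square_vector p1 p2 p3 p4 w"
    by (simp add: cancel)
  moreover have "(\<Sum>x\<in>V. square_vector p1 p2 p3 p4 x * ?A x w)
      = ?A {p1, p2} w - ?A {p2, p3} w + ?A {p3, p4} w - ?A {p4, p1} w"
  proof -
    have delta: "(\<Sum>x\<in>V. of_bool (x = e) * ?A x w) = ?A e w" if "e \<in> V" for e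
      using \<open>finite V\<close> that by (simp add: if_distrib sum.delta cong: if_cong)
    show ?thesis
      unfolding square_vector_def left_diff_distrib distrib_right sum.distrib sum_subtractf
      by (simp add: delta square)
  qed
  ultimately show "(\<Sum>x\<in>V. square_vector p1 p2 p3 p4 x * ?A x w) = -2 * square_vector p1 p2 p3 p4 w"
    by simp
qed

lemma square_vector_first_edge:
  "distinct [p1, p2, p3, p4] \<Longrightarrow> square_vector p1 p2 p3 p4 {p1, p2} = 1"
  by (auto simp: square_vector_def doubleton_eq_iff)

lemma square_vector_support:
  "square_vector p1 p2 p3 p4 f \<noteq> 0 \<Longrightarrow> f \<subseteq> {p1, p2, p3, p4}"
  unfolding square_vector_def by (cases "f \<in> {{p1, p2}, {p2, p3}, {p3, p4}, {p4, p1}}") auto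

lemma finite_cube_edges: "finite (cube_edges n)"
  by (rule finite_subset[of _ "Pow (cube_vertices n)"]) (auto simp: cube_edges_def cube_vertices_def)

lemma card_cube_edge: "w \<in> cube_edges n \<Longrightarrow> card w = 2"
  unfolding cube_edges_def cube_adj_def by (force simp: card_insert_if)

lemma cube_edgeE:
  assumes "e \<in> cube_edges n"
  obtains S i where "S \<subseteq> {0..<n}" "i < n" "e = {S, sym_diff S {i}}"
proof -
  obtain S T where e: "e = {S, T}" and S: "S \<subseteq> {0..<n}" and T: "T \<subseteq> {0..<n}"
    and "card (sym_diff S T) = 1"
    using assms unfolding cube_edges_def cube_vertices_def cube_adj_def by blast
  then obtain i where i: "sym_diff S T = {i}"
    by (auto simp: card_1_singleton_iff)
  have "T = sym_diff S (sym_diff S T)"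
    by blast
  then have "e = {S, sym_diff S {i}}"
    unfolding e i by simp
  moreover have "i \<in> S \<union> T"
    using i by blast
  then have "i < n"
    using S T by auto
  ultimately show thesis
    using that S by blast
qed

lemma sym_diff_cube_edge:
  assumes "S \<subseteq> {0..<n}" "A \<subseteq> {0..<n}" "B \<subseteq> {0..<n}" "card (sym_diff A B) = 1"
  shows "{sym_diff S A, sym_diff S B} \<in> cube_edges n"
proof -
  have "sym_diff (sym_diff S A) (sym_diff S B) = sym_diff A B"
    by blast
  then have "cube_adj (sym_diff S A) (sym_diff S B)"
    using assms(4) by (simp add: cube_adj_def)
  moreover have "sym_diff S A \<in> cube_vertices n" "sym_diff S B \<in> cube_vertices n"
    using assms(1-3) by (auto simp: cube_vertices_def)
  ultimately show ?thesis
    unfolding cube_edges_def by blast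
qed

lemma cube_square_distinct:
  assumes "k \<noteq> i"
  shows "distinct [S, sym_diff S {i}, sym_diff S {i, k}, sym_diff S {k}]"
proof -
  have "inj (\<lambda>D. sym_diff S D)"
    by (rule injI) blast
  moreover have "distinct [{}, {i}, {i, k}, {k}]"
    using assms by (auto simp: doubleton_eq_iff)
  ultimately have "distinct (map (\<lambda>D. sym_diff S D) [{}, {i}, {i, k}, {k}])"
    unfolding distinct_map by (blast intro: inj_on_subset)
  then show ?thesis
    by simp
qed

lemma cube_square_left_eigenvector:
  assumes "S \<subseteq> {0..<n}" "i < n" "k < n" "k \<noteq> i"
  shows "left_eigenvector (cube_edges n) line_adjacency_matrix
           (square_vector S (sym_diff S {i}) (sym_diff S {i, k}) (sym_diff S {k})) (-2)"
proof (rule line_graph_square_left_eigenvector)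
  show "finite (cube_edges n)" "\<forall>w\<in>cube_edges n. card w = 2"
    by (simp_all add: finite_cube_edges card_cube_edge)
  show "distinct [S, sym_diff S {i}, sym_diff S {i, k}, sym_diff S {k}]"
    using assms(4) by (rule cube_square_distinct)
  have "{i, k} \<subseteq> {0..<n}"
    using assms by auto
  then have edge: "{sym_diff S A, sym_diff S B} \<in> cube_edges n"
    if "A \<subseteq> {i, k}" "B \<subseteq> {i, k}" "card (sym_diff A B) = 1" for A B
    using sym_diff_cube_edge[OF assms(1)] that by (meson order_trans)
  have "sym_diff {} {i} = {i}" "sym_diff {i} {i, k} = {k}" "sym_diff {i, k} {k} = {i}" "sym_diff {k} {} = {k}"
    using assms(4) by auto
  then show "{S, sym_diff S {i}} \<in> cube_edges n" "{sym_diff S {i}, sym_diff S {i, k}} \<in> cube_edges n"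
    "{sym_diff S {i, k}, sym_diff S {k}} \<in> cube_edges n" "{sym_diff S {k}, S} \<in> cube_edges n"
    using edge[of "{}" "{i}"] edge[of "{i}" "{i, k}"] edge[of "{i, k}" "{k}"] edge[of "{k}" "{}"] by simp_all
qed

lemma cube_square_vertices:
  "{S, sym_diff S {i}, sym_diff S {i, k}, sym_diff S {k}} = (\<lambda>D. sym_diff S D) ` Pow {i, k}"
  by (auto simp: Pow_insert)

lemma cube_squares_separate:
  assumes "distinct [i, k1, k2]" and "card f = 2" and "f \<noteq> {S, sym_diff S {i}}"
  shows "square_vector S (sym_diff S {i}) (sym_diff S {i, k1}) (sym_diff S {k1}) f = 0
       \<or> square_vector S (sym_diff S {i}) (sym_diff S {i, k2}) (sym_diff S {k2}) f = 0"
proof (rule ccontr)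
  let ?g = "\<lambda>D. sym_diff S D"
  assume "\<not> ?thesis"
  then have "square_vector S (sym_diff S {i}) (sym_diff S {i, k1}) (sym_diff S {k1}) f \<noteq> 0"
    and "square_vector S (sym_diff S {i}) (sym_diff S {i, k2}) (sym_diff S {k2}) f \<noteq> 0"
    by simp_all
  then have "f \<subseteq> ?g ` Pow {i, k1}" and "f \<subseteq> ?g ` Pow {i, k2}"
    by (simp_all only: flip: cube_square_vertices) (blast dest: square_vector_support)+
  then have "f \<subseteq> ?g ` (Pow {i, k1} \<inter> Pow {i, k2})"
    by (subst image_Int) (auto intro: injI)
  also have "Pow {i, k1} \<inter> Pow {i, k2} = Pow {i}"
    unfolding Pow_Int_eq[symmetric] using assms(1) by (intro arg_cong[where f = Pow]) auto
  also have "?g ` Pow {i} = {S, sym_diff S {i}}"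
    by (simp add: Pow_insert insert_commute)
  finally have "f \<subseteq> {S, sym_diff S {i}}" .
  moreover have "card {S, sym_diff S {i}} = 2"
    by (auto simp: card_insert_if)
  ultimately have "f = {S, sym_diff S {i}}"
    using assms(2) by (intro card_subset_eq) auto
  with assms(3) show False ..
qed

lemma no_perfect_state_transfer_off_cube_square:
  assumes "S \<subseteq> {0..<n}" "i < n" "k < n" "k \<noteq> i"
    and "square_vector S (sym_diff S {i}) (sym_diff S {i, k}) (sym_diff S {k}) f = 0"
  shows "\<not> perfect_state_transfer (cube_edges n) line_adjacency_matrix {S, sym_diff S {i}} f"
proof (rule no_perfect_state_transfer_if_left_eigenvector_separates)
  show "left_eigenvector (cube_edges n) line_adjacency_matrix
          (square_vector S (sym_diff S {i}) (sym_diff S {i, k}) (sym_diff S {k})) (-2)"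
    using assms(1-4) by (rule cube_square_left_eigenvector)
  show "{S, sym_diff S {i}} \<in> cube_edges n"
    using sym_diff_cube_edge[OF assms(1), of "{}" "{i}"] assms(2) by simp
qed (use assms square_vector_first_edge[OF cube_square_distinct[OF assms(4)]] in
     \<open>simp_all add: finite_cube_edges\<close>)

theorem mainTheorem15:
  fixes n :: nat and e f :: "nat set set"
  assumes "n \<ge> 3"
    and "e \<in> cube_edges n" and "f \<in> cube_edges n" and "e \<noteq> f"
  shows "\<not> perfect_state_transfer (cube_edges n) line_adjacency_matrix e f"
proof -
  obtain S i where S: "S \<subseteq> {0..<n}" and i: "i < n" and e: "e = {S, sym_diff S {i}}"
    using assms(2) by (rule cube_edgeE)
  have "\<exists>k1 k2 :: nat. k1 < 3 \<and> k2 < 3 \<and> distinct [i, k1, k2]"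
    by (simp; presburger)
  then obtain k1 k2 where "k1 < 3" "k2 < 3" and distinct: "distinct [i, k1, k2]"
    by blast
  with assms(1) have k1: "k1 < n" "k1 \<noteq> i" and k2: "k2 < n" "k2 \<noteq> i"
    by auto
  have "square_vector S (sym_diff S {i}) (sym_diff S {i, k1}) (sym_diff S {k1}) f = 0
      \<or> square_vector S (sym_diff S {i}) (sym_diff S {i, k2}) (sym_diff S {k2}) f = 0"
    using cube_squares_separate[OF distinct card_cube_edge[OF assms(3)]] assms(4) e by blast
  then show ?thesis
    unfolding e using no_perfect_state_transfer_off_cube_square[OF S i] k1 k2 by blast
qed

end
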